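(* Let $(C_n)_{n\in\mathbb{N}}$ be a sequence of regular symmetric bodies in $\mathbb{R}^d$ converging in the Hausdorff metric to a regular symmetric body $C$. Then $\sup_{x\in\mathbb{B}^d}\|\varphi_{C_n}(x)-\varphi_C(x)\|\to0$ as $n\to\infty$.
   Context: A regular symmetric body is a compact convex $C\subset\mathbb{R}^d$ with non-empty interior, $C=-C$, that is smooth (unique supporting hyperplane at each boundary point) and strictly convex (each supporting hyperplane meets $C$ in one point). It defines the norm $\|x\|_C=\inf\{\lambda>0:x\in\lambda C\}$, and $\varphi_C(x)$ is the derivative of $\tfrac12\|\cdot\|_C^2$ at $x\ne0$, with $\varphi_C(0)=0$. $\|\cdot\|$ is the Euclidean norm and $\mathbb{B}^d$ its closed unit ball. *)

theory Defs
  imports "HOL-Analysis.Analysis"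
begin

definition hausdist :: "'a::metric_space set \<Rightarrow> 'a set \<Rightarrow> real" where
  "hausdist S T =
     (if S \<noteq> {} \<and> T \<noteq> {} \<and> bounded S \<and> bounded T
      then max (SUP x\<in>S. infdist x T) (SUP y\<in>T. infdist y S) else 0)"

text \<open>Supporting hyperplane {y. u . y = u . x} of C at the point x of C.\<close>
definition supporting_at :: "'a::euclidean_space set \<Rightarrow> 'a \<Rightarrow> 'a \<Rightarrow> bool" where
  "supporting_at C x u \<longleftrightarrow> x \<in> C \<and> u \<noteq> 0 \<and> (\<forall>y\<in>C. inner u y \<le> inner u x)"

definition regular_symmetric_body :: "'a::euclidean_space set \<Rightarrow> bool" where
  "regular_symmetric_body C \<longleftrightarrow>
     compact C \<and> convex C \<and> interior C \<noteq> {} \<and> (\<forall>x. x \<in> C \<longleftrightarrow> - x \<in> C) \<and>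
     \<comment> \<open>smooth: unique supporting hyperplane at each boundary point\<close>
     (\<forall>x\<in>frontier C. \<forall>u v. supporting_at C x u \<and> supporting_at C x v \<longrightarrow>
        {y. inner u y = inner u x} = {y. inner v y = inner v x}) \<and>
     \<comment> \<open>strictly convex: each supporting hyperplane meets C in exactly one point\<close>
     (\<forall>x u. supporting_at C x u \<longrightarrow> C \<inter> {y. inner u y = inner u x} = {x})"

definition gauge_norm :: "'a::euclidean_space set \<Rightarrow> 'a \<Rightarrow> real" where
  "gauge_norm C x = Inf {l. l > 0 \<and> x \<in> (\<lambda>y. l *\<^sub>R y) ` C}"

definition phi :: "'a::euclidean_space set \<Rightarrow> 'a \<Rightarrow> 'a" where
  "phi C x = (if x = 0 then 0 else
     (SOME g. ((\<lambda>y. (gauge_norm C y)\<^sup>2 / 2) has_derivative (\<lambda>h. inner g h)) (at x)))"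

end

theory Submission
  imports Defs
begin

text \<open>Write \<open>N\<^sub>C\<close> for the gauge of \<open>C\<close> and \<open>f\<^sub>C = N\<^sub>C\<^sup>2 / 2\<close>. This function is convex: at \<open>x \<noteq> 0\<close>
  its subgradients are the normals of supporting hyperplanes of \<open>C\<close> at \<open>x / N\<^sub>C x\<close>, scaled so
  that \<open>v \<bullet> x = N\<^sub>C(x)\<^sup>2\<close>. Smoothness of \<open>C\<close> therefore makes the subgradient unique, and a unique
  subgradient of a continuous convex function depends continuously on the point, hence is the
  gradient: \<open>\<phi>\<^sub>C\<close> is the subgradient map of \<open>f\<^sub>C\<close>. If \<open>C\<^sub>n\<close> is within Hausdorff distance \<open>\<epsilon>\<^sub>n\<close>
  of \<open>C\<close> and both contain the ball of radius \<open>r\<close>, then \<open>N\<^sub>C \<le> (1 + \<epsilon>\<^sub>n / r) N\<^sub>C\<^sub>n\<close> and vice versa, so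
  \<open>f\<^sub>C\<^sub>n \<rightarrow> f\<^sub>C\<close> locally uniformly. Limits of subgradients of converging convex functions are
  subgradients of the limit; by uniqueness and compactness of the unit ball this yields uniform
  convergence \<open>\<phi>\<^sub>C\<^sub>n \<rightarrow> \<phi>\<^sub>C\<close>.\<close>

section \<open>Uniform limits\<close>

lemma tendsto_uniform_limit_diagonal:
  fixes F :: "nat \<Rightarrow> 'a::topological_space \<Rightarrow> 'b::real_normed_vector"
  assumes lim: "uniform_limit K F f sequentially" and cont: "continuous_on K f"
    and m: "filterlim m sequentially sequentially"
    and "xs \<longlonglongrightarrow> x" and xs: "\<And>j. xs j \<in> K" and "x \<in> K"
  shows "(\<lambda>j. F (m j) (xs j)) \<longlonglongrightarrow> f x"
proof (rule Lim_transform[where g = "\<lambda>j. f (xs j)"])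
  show "(\<lambda>j. f (xs j)) \<longlonglongrightarrow> f x"
    using continuous_on_tendsto_compose[OF cont \<open>xs \<longlonglongrightarrow> x\<close> \<open>x \<in> K\<close>] xs by simp
  show "(\<lambda>j. F (m j) (xs j) - f (xs j)) \<longlonglongrightarrow> 0"
  proof (rule tendstoI)
    fix \<epsilon> :: real assume "\<epsilon> > 0"
    have "\<forall>\<^sub>F j in sequentially. \<forall>y\<in>K. dist (F (m j) y) (f y) < \<epsilon>"
      using eventually_compose_filterlim[OF uniform_limitD[OF lim \<open>\<epsilon> > 0\<close>] m] .
    then show "\<forall>\<^sub>F j in sequentially. dist (F (m j) (xs j) - f (xs j)) 0 < \<epsilon>"
      by eventually_elim (use xs in \<open>simp add: dist_norm\<close>)
  qed
qed

lemma uniform_limit_imp_SUP_norm_diff_tendsto_0: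
  fixes G :: "'b \<Rightarrow> 'a \<Rightarrow> 'c::real_normed_vector"
  assumes "uniform_limit K G g F" and "K \<noteq> {}"
  shows "((\<lambda>n. SUP x\<in>K. norm (G n x - g x)) \<longlongrightarrow> 0) F"
proof (rule tendstoI)
  fix e :: real assume "e > 0"
  then have "\<forall>\<^sub>F n in F. \<forall>x\<in>K. dist (G n x) (g x) < e / 2"
    by (intro uniform_limitD[OF assms(1)]) simp
  then show "\<forall>\<^sub>F n in F. dist (SUP x\<in>K. norm (G n x - g x)) 0 < e"
  proof eventually_elim
    case (elim n)
    then have le: "\<forall>x\<in>K. norm (G n x - g x) \<le> e / 2"
      by (auto simp: dist_norm less_imp_le)
    obtain x where "x \<in> K"
      using assms(2) by blast
    have "0 \<le> (SUP x\<in>K. norm (G n x - g x))"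
      using le \<open>x \<in> K\<close> by (intro cSUP_upper2[where x = x] bdd_aboveI2[where M = "e / 2"]) auto
    moreover have "(SUP x\<in>K. norm (G n x - g x)) \<le> e / 2"
      using le assms(2) by (intro cSUP_least) auto
    ultimately show ?case
      using \<open>e > 0\<close> by simp
  qed
qed

section \<open>Subgradients\<close>

definition is_subgradient :: "('a::real_inner \<Rightarrow> real) \<Rightarrow> 'a \<Rightarrow> 'a \<Rightarrow> bool" where
  "is_subgradient f x v \<longleftrightarrow> (\<forall>y. f x + inner v (y - x) \<le> f y)"

lemma is_subgradient_limit:
  fixes F :: "nat \<Rightarrow> 'a::real_inner \<Rightarrow> real"
  assumes "\<And>y. (\<lambda>n. F n y) \<longlonglongrightarrow> f y" and "xs \<longlonglongrightarrow> x" and "(\<lambda>n. F n (xs n)) \<longlonglongrightarrow> f x"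
    and "vs \<longlonglongrightarrow> v" and "eventually (\<lambda>n. is_subgradient (F n) (xs n) (vs n)) sequentially"
  shows "is_subgradient f x v"
  unfolding is_subgradient_def
proof
  fix y
  show "f x + inner v (y - x) \<le> f y"
  proof (rule tendsto_le[OF trivial_limit_sequentially assms(1)])
    show "(\<lambda>n. F n (xs n) + inner (vs n) (y - xs n)) \<longlonglongrightarrow> f x + inner v (y - x)"
      by (intro tendsto_intros assms)
    show "\<forall>\<^sub>F n in sequentially. F n (xs n) + inner (vs n) (y - xs n) \<le> F n y"
      using assms(5) by eventually_elim (simp add: is_subgradient_def)
  qed
qed

lemma uniform_limit_subgradients:
  fixes F :: "nat \<Rightarrow> 'a::euclidean_space \<Rightarrow> real" and G :: "nat \<Rightarrow> 'a \<Rightarrow> 'a"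
  assumes "compact K"
    and lim: "uniform_limit K F f sequentially" and pointwise: "\<And>y. (\<lambda>n. F n y) \<longlonglongrightarrow> f y"
    and cont: "continuous_on K f"
    and sub_n: "eventually (\<lambda>n. \<forall>x\<in>K. is_subgradient (F n) x (G n x)) sequentially"
    and sub: "\<And>x. x \<in> K \<Longrightarrow> is_subgradient f x (g x)"
    and unique: "\<And>x v. x \<in> K \<Longrightarrow> is_subgradient f x v \<Longrightarrow> v = g x"
    and bound_n: "eventually (\<lambda>n. \<forall>x\<in>K. norm (G n x) \<le> B) sequentially"
    and bound: "\<And>x. x \<in> K \<Longrightarrow> norm (g x) \<le> B"
  shows "uniform_limit K G g sequentially"
proof (rule uniform_limitI, rule ccontr)
  fix e :: real
  assume "e > 0" and "\<not> (\<forall>\<^sub>F n in sequentially. \<forall>x\<in>K. dist (G n x) (g x) < e)"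
  moreover obtain N0 where N0: "\<And>n. n \<ge> N0 \<Longrightarrow> \<forall>x\<in>K. is_subgradient (F n) x (G n x) \<and> norm (G n x) \<le> B"
    using eventually_conj[OF sub_n bound_n] unfolding eventually_sequentially by blast
  ultimately have "\<forall>j. \<exists>n x. n \<ge> max j N0 \<and> x \<in> K \<and> e \<le> dist (G n x) (g x)"
    unfolding eventually_sequentially by (meson not_le)
  \<comment> \<open>Along a subsequence the points and both subgradients converge; both limits are
    subgradients of \<open>f\<close>, hence equal, although they are at least \<open>e\<close> apart.\<close>
  then obtain m xs where m: "\<And>j. m j \<ge> max j N0" and xs: "\<And>j. xs j \<in> K"
    and far: "\<And>j. e \<le> dist (G (m j) (xs j)) (g (xs j))"
    by metis
  have "seq_compact (K \<times> cball (0::'a) B \<times> cball (0::'a) B)"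
    using \<open>compact K\<close> by (intro compact_imp_seq_compact compact_Times compact_cball)
  moreover have "\<forall>j. (xs j, G (m j) (xs j), g (xs j)) \<in> K \<times> cball 0 B \<times> cball 0 B"
    using xs N0 m bound by auto
  ultimately obtain l \<sigma> where "l \<in> K \<times> cball 0 B \<times> cball 0 B" and "strict_mono \<sigma>"
    and l: "((\<lambda>j. (xs j, G (m j) (xs j), g (xs j))) \<circ> \<sigma>) \<longlonglongrightarrow> l"
    by (rule seq_compactE)
  then obtain x v w where "l = (x, v, w)" and "x \<in> K" by auto
  with l have X: "(\<lambda>j. xs (\<sigma> j)) \<longlonglongrightarrow> x" and V: "(\<lambda>j. G (m (\<sigma> j)) (xs (\<sigma> j))) \<longlonglongrightarrow> v"
    and W: "(\<lambda>j. g (xs (\<sigma> j))) \<longlonglongrightarrow> w"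
    using tendsto_fst[OF l] tendsto_fst[OF tendsto_snd[OF l]] tendsto_snd[OF tendsto_snd[OF l]]
    by (simp_all add: o_def)
  have m\<sigma>: "filterlim (\<lambda>j. m (\<sigma> j)) sequentially sequentially"
    using m seq_suble[OF \<open>strict_mono \<sigma>\<close>]
    by (intro filterlim_at_top_mono[OF filterlim_ident] always_eventually) (meson le_trans max.boundedE)
  have fX: "(\<lambda>j. f (xs (\<sigma> j))) \<longlonglongrightarrow> f x"
    using continuous_on_tendsto_compose[OF cont X \<open>x \<in> K\<close>] xs by simp
  have FX: "(\<lambda>j. F (m (\<sigma> j)) (xs (\<sigma> j))) \<longlonglongrightarrow> f x"
    using lim cont m\<sigma> X xs \<open>x \<in> K\<close> by (rule tendsto_uniform_limit_diagonal)
  have "is_subgradient f x v"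
  proof (rule is_subgradient_limit[where F = "\<lambda>j. F (m (\<sigma> j))" and xs = "\<lambda>j. xs (\<sigma> j)"])
    show "(\<lambda>j. F (m (\<sigma> j)) y) \<longlonglongrightarrow> f y" for y
      using filterlim_compose[OF pointwise m\<sigma>] .
    show "\<forall>\<^sub>F j in sequentially. is_subgradient (F (m (\<sigma> j))) (xs (\<sigma> j)) (G (m (\<sigma> j)) (xs (\<sigma> j)))"
      using N0 m xs by (intro always_eventually) (meson max.boundedE)
  qed (fact X FX V)+
  moreover have "is_subgradient f x w"
    by (rule is_subgradient_limit[where F = "\<lambda>_. f" and xs = "\<lambda>j. xs (\<sigma> j)"])
      (use X fX W sub xs in auto)
  moreover have "e \<le> dist v w"
    using far by (intro tendsto_le[OF trivial_limit_sequentially tendsto_dist[OF V W] tendsto_const]) auto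
  ultimately show False
    using unique[OF \<open>x \<in> K\<close>] \<open>e > 0\<close> by (metis dist_self not_le)
qed

text \<open>Continuity at \<open>x\<close> is uniform convergence on \<open>{x}\<close> of the subgradients of the
  translates \<open>f (y + h n)\<close>, for \<open>h n \<longlonglongrightarrow> 0\<close>.\<close>

lemma isCont_unique_subgradient:
  fixes f :: "'a::euclidean_space \<Rightarrow> real"
  assumes cont: "continuous_on UNIV f"
    and sub: "\<And>y. is_subgradient f y (g y)"
    and unique: "\<And>v. is_subgradient f x v \<Longrightarrow> v = g x"
    and bound: "\<And>y. y \<in> cball x 1 \<Longrightarrow> norm (g y) \<le> B"
  shows "isCont g x"
proof (rule continuous_at_sequentiallyI)
  fix u assume "u \<longlonglongrightarrow> x"
  define h where "h n = u n - x" for n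
  have h: "h \<longlonglongrightarrow> 0"
    unfolding h_def using tendsto_diff[OF \<open>u \<longlonglongrightarrow> x\<close> tendsto_const[of x]] by simp
  have translates: "(\<lambda>n. f (y + h n)) \<longlonglongrightarrow> f y" for y
    using continuous_on_tendsto_compose[OF cont tendsto_add[OF tendsto_const h]] by simp
  have "uniform_limit {x} (\<lambda>n y. g (y + h n)) g sequentially"
  proof (rule uniform_limit_subgradients[where F = "\<lambda>n y. f (y + h n)" and B = B])
    show "\<forall>\<^sub>F n in sequentially. \<forall>y\<in>{x}. is_subgradient (\<lambda>z. f (z + h n)) y (g (y + h n))"
      using sub unfolding is_subgradient_def by (intro always_eventually) (metis add_diff_cancel_right)
    have "\<forall>\<^sub>F n in sequentially. dist (h n) 0 < 1"
      using h by (rule tendstoD) simp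
    then show "\<forall>\<^sub>F n in sequentially. \<forall>y\<in>{x}. norm (g (y + h n)) \<le> B"
      by eventually_elim (auto intro!: bound simp: dist_norm)
  qed (use translates cont sub unique bound in \<open>auto intro: continuous_on_subset\<close>)
  then show "(\<lambda>n. g (u n)) \<longlonglongrightarrow> g x"
    by (simp add: h_def)
qed

lemma has_derivative_continuous_subgradient:
  fixes f :: "'a::real_inner \<Rightarrow> real"
  assumes sub: "\<And>y. is_subgradient f y (g y)" and "isCont g x"
  shows "(f has_derivative inner (g x)) (at x)"
  unfolding has_derivative_at_alt
proof (intro conjI allI impI)
  show "bounded_linear (inner (g x))"
    by (rule bounded_linear_inner_right)
  fix e :: real assume "e > 0"
  then obtain d where "d > 0" and d: "\<And>y. norm (y - x) < d \<Longrightarrow> norm (g y - g x) < e"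
    using \<open>isCont g x\<close> unfolding continuous_at_eps_delta dist_norm by blast
  have "norm (f y - f x - inner (g x) (y - x)) \<le> e * norm (y - x)" if "norm (y - x) < d" for y
  proof -
    have "0 \<le> f y - f x - inner (g x) (y - x)"
      using sub[of x] unfolding is_subgradient_def by (metis diff_ge_0_iff_ge add.commute le_diff_eq)
    moreover have "f y - f x - inner (g x) (y - x) \<le> inner (g y - g x) (y - x)"
      using sub[of y] unfolding is_subgradient_def
      by (smt (verit) inner_diff_left inner_minus_right minus_diff_eq)
    moreover have "inner (g y - g x) (y - x) \<le> e * norm (y - x)"
      using norm_cauchy_schwarz[of "g y - g x" "y - x"] d[OF that] \<open>e > 0\<close>
      by (smt (verit) mult_right_mono norm_ge_zero)
    ultimately show ?thesis
      by simp
  qed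
  with \<open>d > 0\<close> show "\<exists>d>0. \<forall>y. norm (y - x) < d \<longrightarrow> norm (f y - f x - inner (g x) (y - x)) \<le> e * norm (y - x)"
    by blast
qed

section \<open>Gauges of convex bodies around a ball\<close>

lemma mem_scaleR_image_iff:
  fixes C :: "'a::real_vector set"
  assumes "t \<noteq> 0"
  shows "x \<in> (\<lambda>y. t *\<^sub>R y) ` C \<longleftrightarrow> inverse t *\<^sub>R x \<in> C"
  using assms by (auto simp: image_iff intro!: bexI[of _ "inverse t *\<^sub>R x"])

locale gauge_body =
  fixes C :: "'a::euclidean_space set" and r :: real
  assumes compact: "compact C" and convex: "convex C"
    and radius_pos: "0 < r" and cball_subset: "cball 0 r \<subseteq> C"
begin

abbreviation N :: "'a \<Rightarrow> real" where "N \<equiv> gauge_norm C"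

lemma zero_mem: "0 \<in> C"
  using cball_subset radius_pos by auto

lemma scaled_mem_if_norm_less:
  assumes "norm x / r < t"
  shows "inverse t *\<^sub>R x \<in> C"
proof -
  have "t > 0"
    using assms radius_pos by (smt (verit) divide_nonneg_pos norm_ge_zero)
  then have "norm (inverse t *\<^sub>R x) \<le> r"
    using assms radius_pos by (simp add: field_simps)
  then show ?thesis
    using cball_subset by auto
qed

lemma gauge_norm_eq_Inf: "N x = Inf {l. l > 0 \<and> inverse l *\<^sub>R x \<in> C}"
  unfolding gauge_norm_def by (rule arg_cong[where f = Inf]) (auto simp: mem_scaleR_image_iff)

lemma gauge_le_iff:
  assumes "t > 0"
  shows "N x \<le> t \<longleftrightarrow> inverse t *\<^sub>R x \<in> C"
proof -
  define S where "S = {l. l > 0 \<and> inverse l *\<^sub>R x \<in> C}"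
  have "bdd_below S"
    unfolding S_def by (rule bdd_belowI[of _ 0]) auto
  have "S \<noteq> {}"
    using scaled_mem_if_norm_less[of x "norm x / r + 1"] radius_pos unfolding S_def
    by (smt (verit) divide_nonneg_pos mem_Collect_eq norm_ge_zero empty_iff)
  have upward: "m \<in> S" if "l \<in> S" "l \<le> m" for l m
  proof -
    have "(l / m) *\<^sub>R (inverse l *\<^sub>R x) + (1 - l / m) *\<^sub>R 0 \<in> C"
      using that zero_mem by (intro convexD[OF convex]) (auto simp: S_def)
    moreover have "(l / m) *\<^sub>R (inverse l *\<^sub>R x) + (1 - l / m) *\<^sub>R 0 = inverse m *\<^sub>R x"
      using that by (simp add: S_def inverse_eq_divide)
    ultimately have "inverse m *\<^sub>R x \<in> C"
      by metis
    then show ?thesis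
      using that by (simp add: S_def)
  qed
  show ?thesis
  proof
    assume "N x \<le> t"
    have "inverse s *\<^sub>R x \<in> C" if "s > t" for s
    proof -
      obtain l where "l \<in> S" "l < s"
        using \<open>N x \<le> t\<close> \<open>s > t\<close> cInf_less_iff[OF \<open>S \<noteq> {}\<close> \<open>bdd_below S\<close>, of s]
        unfolding gauge_norm_eq_Inf S_def[symmetric] by auto
      then show ?thesis
        using upward[of l s] by (simp add: S_def)
    qed
    then have "\<forall>\<^sub>F s in at_right t. inverse s *\<^sub>R x \<in> C"
      by (rule eventually_mono[OF eventually_at_right_less])
    moreover have "((\<lambda>s. inverse s *\<^sub>R x) \<longlongrightarrow> inverse t *\<^sub>R x) (at_right t)"
      using \<open>t > 0\<close> by (intro tendsto_intros) auto
    ultimately show "inverse t *\<^sub>R x \<in> C"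
      using compact_imp_closed[OF compact] by (intro Lim_in_closed_set) auto
  next
    assume "inverse t *\<^sub>R x \<in> C"
    then show "N x \<le> t"
      unfolding gauge_norm_eq_Inf using \<open>t > 0\<close> \<open>bdd_below S\<close>
      by (intro cInf_lower) (auto simp: S_def)
  qed
qed

lemma gauge_le_norm: "N x \<le> norm x / r"
  using gauge_le_iff scaled_mem_if_norm_less
  by (meson dense_ge divide_nonneg_pos norm_ge_zero radius_pos le_less_trans)

lemma gauge_nonneg: "N x \<ge> 0"
proof -
  have "norm x / r + 1 > 0"
    using radius_pos by (simp add: add_nonneg_pos)
  then show ?thesis
    unfolding gauge_norm_eq_Inf using scaled_mem_if_norm_less[of x "norm x / r + 1"]
    by (intro cInf_greatest) auto
qed

lemma gauge_zero [simp]: "N 0 = 0"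
  using gauge_le_norm[of 0] gauge_nonneg[of 0] by simp

lemma gauge_le_one: "z \<in> C \<Longrightarrow> N z \<le> 1"
  using gauge_le_iff[of 1 z] by simp

lemma gauge_scaleR:
  assumes "a > 0"
  shows "N (a *\<^sub>R x) = a * N x"
proof -
  have le_iff: "N (a *\<^sub>R x) \<le> t \<longleftrightarrow> a * N x \<le> t" if "t > 0" for t
  proof -
    have "N (a *\<^sub>R x) \<le> t \<longleftrightarrow> inverse (t / a) *\<^sub>R x \<in> C"
      using gauge_le_iff[OF that] assms by (simp add: field_simps)
    also have "\<dots> \<longleftrightarrow> N x \<le> t / a"
      using gauge_le_iff[of "t / a"] that assms by simp
    finally show ?thesis
      using assms by (simp add: field_simps)
  qed
  have "0 \<le> N (a *\<^sub>R x)" "0 \<le> a * N x"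
    using gauge_nonneg assms by auto
  show ?thesis
  proof (rule antisym; rule dense_ge)
    show "N (a *\<^sub>R x) \<le> t" if "a * N x < t" for t
      using le_iff[of t] that \<open>0 \<le> a * N x\<close> by auto
    show "a * N x \<le> t" if "N (a *\<^sub>R x) < t" for t
      using le_iff[of t] that \<open>0 \<le> N (a *\<^sub>R x)\<close> by auto
  qed
qed

lemma gauge_pos:
  assumes "x \<noteq> 0"
  shows "N x > 0"
proof -
  obtain R where "R > 0" and R: "\<And>y. y \<in> C \<Longrightarrow> norm y \<le> R"
    using compact_imp_bounded[OF compact] bounded_pos by blast
  have "norm x / R \<le> N x"
  proof (rule dense_ge)
    fix t assume "N x < t"
    then have "t > 0" and "inverse t *\<^sub>R x \<in> C"
      using gauge_nonneg[of x] gauge_le_iff[of t x] by auto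
    then have "norm x / t \<le> R"
      using R[of "inverse t *\<^sub>R x"] by (simp add: divide_inverse_commute)
    then show "norm x / R \<le> t"
      using \<open>t > 0\<close> \<open>R > 0\<close> by (simp add: field_simps)
  qed
  moreover have "norm x / R > 0"
    using assms \<open>R > 0\<close> by simp
  ultimately show ?thesis
    by linarith
qed

lemma normalized_mem: "x \<noteq> 0 \<Longrightarrow> inverse (N x) *\<^sub>R x \<in> C"
  using gauge_le_iff[OF gauge_pos] by blast

lemma normalized_mem_frontier:
  assumes "x \<noteq> 0"
  shows "inverse (N x) *\<^sub>R x \<in> frontier C"
proof -
  define p where "p = inverse (N x) *\<^sub>R x"
  have "N p = 1" and "p \<noteq> 0"
    using gauge_scaleR[of "inverse (N x)" x] gauge_pos[OF assms] assms by (auto simp: p_def)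
  have "p \<notin> interior C"
  proof
    assume "p \<in> interior C"
    then obtain e where "e > 0" and "cball p e \<subseteq> C"
      using mem_interior_cball by blast
    moreover have "dist p ((1 + e / norm p) *\<^sub>R p) = e"
      using \<open>p \<noteq> 0\<close> \<open>e > 0\<close> by (simp add: dist_norm algebra_simps)
    ultimately have "N ((1 + e / norm p) *\<^sub>R p) \<le> 1"
      by (intro gauge_le_one) auto
    moreover have "N ((1 + e / norm p) *\<^sub>R p) = 1 + e / norm p"
      using gauge_scaleR[of "1 + e / norm p" p] \<open>N p = 1\<close> \<open>e > 0\<close> by (simp add: add_pos_nonneg)
    moreover have "e / norm p > 0"
      using \<open>e > 0\<close> \<open>p \<noteq> 0\<close> by simp
    ultimately show False
      by linarith
  qed
  then show ?thesis
    using normalized_mem[OF assms] compact_imp_closed[OF compact]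
    by (simp add: frontier_def p_def)
qed

lemma exists_supporting_at:
  assumes "p \<in> frontier C"
  obtains u where "supporting_at C p u"
proof -
  have "ball 0 r \<subseteq> interior C"
    using cball_subset by (meson ball_subset_cball interior_maximal open_ball order_trans)
  then have "rel_interior C = interior C"
    using radius_pos by (intro rel_interior_nonempty_interior) auto
  moreover have "p \<in> closure C" and "p \<notin> interior C"
    using assms by (auto simp: frontier_def)
  ultimately obtain a where "a \<noteq> 0" and a: "\<And>y. y \<in> closure C \<Longrightarrow> a \<bullet> p \<le> a \<bullet> y"
    using supporting_hyperplane_relative_frontier[OF convex, of p] by metis
  then have "supporting_at C p (- a)"
    using assms compact_imp_closed[OF compact] closure_subset
    by (auto simp: supporting_at_def frontier_def)
  then show ?thesis
    by (rule that)
qed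

lemma supporting_at_inner_pos:
  assumes "supporting_at C p u"
  shows "inner u p > 0"
proof -
  have "u \<noteq> 0" and "(r / norm u) *\<^sub>R u \<in> C"
    using assms cball_subset radius_pos by (auto simp: supporting_at_def)
  then have "inner u ((r / norm u) *\<^sub>R u) \<le> inner u p"
    using assms by (auto simp: supporting_at_def)
  moreover have "inner u ((r / norm u) *\<^sub>R u) = r * norm u"
    using \<open>u \<noteq> 0\<close> by (simp add: power2_norm_eq_inner[symmetric] power2_eq_square)
  ultimately show ?thesis
    using radius_pos \<open>u \<noteq> 0\<close> by (smt (verit) mult_pos_pos zero_less_norm_iff)
qed

lemma inner_le_gauge:
  assumes "\<And>z. z \<in> C \<Longrightarrow> inner w z \<le> 1"
  shows "inner w y \<le> N y"
proof (cases "y = 0")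
  case False
  have "inner w y = N y * inner w (inverse (N y) *\<^sub>R y)"
    using gauge_pos[OF False] by simp
  also have "\<dots> \<le> N y"
    using assms[OF normalized_mem[OF False]] gauge_pos[OF False] by (simp add: mult_left_le)
  finally show ?thesis .
qed simp

lemma gauge_support:
  assumes "x \<noteq> 0"
  obtains w where "inner w x = N x" and "\<And>y. inner w y \<le> N y"
proof -
  define p where "p = inverse (N x) *\<^sub>R x"
  obtain u where u: "supporting_at C p u"
    using exists_supporting_at normalized_mem_frontier[OF assms] p_def by blast
  define w where "w = inverse (inner u p) *\<^sub>R u"
  have "inner u p > 0"
    using supporting_at_inner_pos[OF u] .
  have "inner u x = N x * inner u p"
    using gauge_pos[OF assms] by (simp add: p_def)
  then have "inner w x = N x"
    using \<open>inner u p > 0\<close> by (simp add: w_def)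
  moreover have "inner w y \<le> N y" for y
    using u \<open>inner u p > 0\<close>
    by (intro inner_le_gauge) (auto simp: supporting_at_def w_def field_simps)
  ultimately show ?thesis
    by (rule that)
qed

lemma norm_le_if_inner_le_gauge:
  assumes "\<And>y. inner w y \<le> N y"
  shows "norm w \<le> 1 / r"
proof -
  have "norm w * norm w \<le> norm w / r"
    using assms[of w] gauge_le_norm[of w] by (simp add: power2_norm_eq_inner[symmetric] power2_eq_square)
  then show ?thesis
    using radius_pos by (cases "w = 0") (auto simp: field_simps)
qed

lemma gauge_lipschitz: "\<bar>N y - N z\<bar> \<le> norm (y - z) / r"
proof -
  have "N y - N z \<le> norm (y - z) / r" for y z
  proof (cases "y = 0")
    case False
    then obtain w where "inner w y = N y" and w: "\<And>y. inner w y \<le> N y"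
      using gauge_support by blast
    then have "N y - N z \<le> inner w (y - z)"
      using w[of z] by (simp add: inner_diff_right)
    also have "\<dots> \<le> norm w * norm (y - z)"
      by (rule norm_cauchy_schwarz)
    also have "\<dots> \<le> norm (y - z) / r"
      using norm_le_if_inner_le_gauge[OF w] mult_right_mono[of "norm w" "1 / r" "norm (y - z)"] by simp
    finally show ?thesis .
  next
    case True
    have "0 \<le> norm (y - z) / r"
      using radius_pos by simp
    then show ?thesis
      using gauge_nonneg[of z] True by simp
  qed
  from this[of y z] this[of z y] show ?thesis
    by (simp add: norm_minus_commute)
qed

lemma continuous_on_gauge: "continuous_on UNIV N"
proof (rule lipschitz_on_continuous_on)
  show "(1 / r)-lipschitz_on UNIV N"
    using gauge_lipschitz radius_pos by (intro lipschitz_onI) (auto simp: dist_real_def dist_norm)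
qed

lemma smaller_radius: "0 < s \<Longrightarrow> s \<le> r \<Longrightarrow> gauge_body C s"
  using compact convex cball_subset by unfold_locales auto

end

lemma regular_symmetric_body_imp_gauge_body:
  assumes "regular_symmetric_body C"
  obtains r where "gauge_body C r"
proof -
  have "compact C" and "convex C" and "interior C \<noteq> {}" and sym: "\<And>x. x \<in> C \<Longrightarrow> - x \<in> C"
    using assms unfolding regular_symmetric_body_def by blast+
  then obtain a d where "d > 0" and ball: "ball a d \<subseteq> C"
    using mem_interior by (metis ex_in_conv)
  have "z \<in> C" if "z \<in> cball 0 (d / 2)" for z
  proof -
    have "a + z \<in> C" and "a - z \<in> C"
      using that \<open>d > 0\<close> ball by (auto simp: dist_norm subset_iff)
    then have "a + z \<in> C" and "- (a - z) \<in> C"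
      using sym by blast+
    then have "(1/2) *\<^sub>R (a + z) + (1/2) *\<^sub>R (- (a - z)) \<in> C"
      using convexD[OF \<open>convex C\<close>] by simp
    moreover have "(1/2) *\<^sub>R (a + z) + (1/2) *\<^sub>R (- (a - z)) = z"
      by (simp add: algebra_simps flip: scaleR_add_left)
    ultimately show ?thesis
      by simp
  qed
  then have "gauge_body C (d / 2)"
    using \<open>compact C\<close> \<open>convex C\<close> \<open>d > 0\<close> by unfold_locales auto
  then show ?thesis
    by (rule that)
qed

section \<open>The half squared gauge\<close>

definition half_gauge_sq :: "'a::euclidean_space set \<Rightarrow> 'a \<Rightarrow> real" where
  "half_gauge_sq C y = (gauge_norm C y)\<^sup>2 / 2"

context gauge_body
begin

lemma continuous_on_half_gauge_sq: "continuous_on UNIV (half_gauge_sq C)"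
  unfolding half_gauge_sq_def[abs_def] by (intro continuous_intros continuous_on_gauge) auto

lemma half_gauge_sq_nonneg: "half_gauge_sq C y \<ge> 0"
  by (simp add: half_gauge_sq_def)

lemma half_gauge_sq_le: "half_gauge_sq C y \<le> (norm y)\<^sup>2 / (2 * r\<^sup>2)"
proof -
  have "(N y)\<^sup>2 \<le> (norm y / r)\<^sup>2"
    using gauge_le_norm gauge_nonneg by (intro power_mono)
  then show ?thesis
    by (simp add: half_gauge_sq_def power_divide)
qed

lemma half_gauge_sq_scaleR: "t > 0 \<Longrightarrow> half_gauge_sq C (t *\<^sub>R x) = t\<^sup>2 * half_gauge_sq C x"
  by (simp add: half_gauge_sq_def gauge_scaleR power_mult_distrib)

lemma exists_subgradient: "\<exists>v. is_subgradient (half_gauge_sq C) x v"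
proof (cases "x = 0")
  case True
  then have "is_subgradient (half_gauge_sq C) x 0"
    by (simp add: is_subgradient_def half_gauge_sq_nonneg half_gauge_sq_def)
  then show ?thesis ..
next
  case False
  then obtain w where "inner w x = N x" and w: "\<And>y. inner w y \<le> N y"
    using gauge_support by blast
  have "is_subgradient (half_gauge_sq C) x (N x *\<^sub>R w)"
    unfolding is_subgradient_def
  proof
    fix y
    have "N x * inner w y \<le> N x * N y"
      using w gauge_nonneg by (intro mult_left_mono)
    moreover have "0 \<le> (N y - N x)\<^sup>2"
      by simp
    ultimately show "half_gauge_sq C x + inner (N x *\<^sub>R w) (y - x) \<le> half_gauge_sq C y"
      using \<open>inner w x = N x\<close>
      by (simp add: half_gauge_sq_def inner_diff_right power2_eq_square algebra_simps)
  qed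
  then show ?thesis ..
qed

lemma norm_subgradient_le:
  assumes "is_subgradient (half_gauge_sq C) x v" and "norm x \<le> R"
  shows "norm v \<le> (R + 1)\<^sup>2 / (2 * r\<^sup>2)"
proof (cases "v = 0")
  case False
  define y where "y = x + inverse (norm v) *\<^sub>R v"
  have "inner v (y - x) = norm v"
    using False by (simp add: y_def dot_square_norm power2_eq_square)
  then have "half_gauge_sq C x + norm v \<le> half_gauge_sq C y"
    using assms(1) unfolding is_subgradient_def by metis
  also have "\<dots> \<le> (norm y)\<^sup>2 / (2 * r\<^sup>2)"
    by (rule half_gauge_sq_le)
  also have "\<dots> \<le> (R + 1)\<^sup>2 / (2 * r\<^sup>2)"
  proof -
    have "norm y \<le> norm x + 1"
      using False norm_triangle_ineq[of x "inverse (norm v) *\<^sub>R v"] by (simp add: y_def)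
    then show ?thesis
      using assms(2) by (intro divide_right_mono power_mono) auto
  qed
  finally show ?thesis
    using half_gauge_sq_nonneg[of x] by linarith
qed simp

lemma subgradient_at_zero:
  assumes "is_subgradient (half_gauge_sq C) 0 v"
  shows "v = 0"
proof -
  have "half_gauge_sq C 0 = 0"
    by (simp add: half_gauge_sq_def)
  then have "r\<^sup>2 * (norm v)\<^sup>2 = inner v (r\<^sup>2 *\<^sub>R v - 0) + half_gauge_sq C 0"
    by (simp add: dot_square_norm)
  also have "\<dots> \<le> half_gauge_sq C (r\<^sup>2 *\<^sub>R v)"
    using assms unfolding is_subgradient_def by (metis add.commute)
  also have "\<dots> \<le> (norm (r\<^sup>2 *\<^sub>R v))\<^sup>2 / (2 * r\<^sup>2)"
    by (rule half_gauge_sq_le)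
  also have "\<dots> = r\<^sup>2 * (norm v)\<^sup>2 / 2"
    using radius_pos by (simp add: power_mult_distrib power2_eq_square)
  finally show ?thesis
    using radius_pos by simp
qed

lemma inner_subgradient_self:
  assumes "x \<noteq> 0" and sub: "is_subgradient (half_gauge_sq C) x v"
  shows "inner v x = (N x)\<^sup>2"
proof -
  define a c where "a = (N x)\<^sup>2" and "c = inner v x"
  have "a > 0"
    using gauge_pos[OF assms(1)] by (simp add: a_def)
  have scaled: "a / 2 + (t - 1) * c \<le> t\<^sup>2 * a / 2" if "t > 0" for t
    using sub[unfolded is_subgradient_def, rule_format, of "t *\<^sub>R x"] half_gauge_sq_scaleR[OF that, of x]
    by (simp add: a_def c_def half_gauge_sq_def inner_diff_right algebra_simps)
  have "c > 0"
    using scaled[of "1/2"] \<open>a > 0\<close> by (simp add: power2_eq_square)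
  \<comment> \<open>\<open>t = c / a\<close> minimises \<open>t\<^sup>2 * a / 2 - (t - 1) * c\<close>\<close>
  then have "a / 2 + (c / a - 1) * c - (c / a)\<^sup>2 * a / 2 \<le> 0"
    using scaled[of "c / a"] \<open>a > 0\<close> by simp
  also have "a / 2 + (c / a - 1) * c - (c / a)\<^sup>2 * a / 2 = (c - a)\<^sup>2 / (2 * a)"
    using \<open>a > 0\<close> by (simp add: field_simps power2_eq_square)
  finally show ?thesis
    using \<open>a > 0\<close> by (simp add: a_def c_def divide_le_0_iff)
qed

lemma subgradient_supporting_at:
  assumes "x \<noteq> 0" and sub: "is_subgradient (half_gauge_sq C) x v"
  shows "supporting_at C (inverse (N x) *\<^sub>R x) v"
proof -
  have "N x > 0"
    using gauge_pos[OF assms(1)] .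
  have "inner v z \<le> inner v (inverse (N x) *\<^sub>R x)" if "z \<in> C" for z
  proof -
    have "N (N x *\<^sub>R z) \<le> N x"
      using gauge_scaleR[OF \<open>N x > 0\<close>] gauge_le_one[OF that] \<open>N x > 0\<close> by simp
    then have "half_gauge_sq C (N x *\<^sub>R z) \<le> half_gauge_sq C x"
      using gauge_nonneg by (simp add: half_gauge_sq_def power_mono)
    then have "N x * inner v z \<le> inner v x"
      using sub[unfolded is_subgradient_def, rule_format, of "N x *\<^sub>R z"]
      by (simp add: inner_diff_right)
    then show ?thesis
      using \<open>N x > 0\<close> by (simp add: field_simps)
  qed
  moreover have "v \<noteq> 0"
    using inner_subgradient_self[OF assms] \<open>N x > 0\<close> by auto
  ultimately show ?thesis
    using normalized_mem[OF assms(1)] by (simp add: supporting_at_def)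
qed

end

lemma hyperplane_eq_imp_parallel:
  fixes u v p :: "'a::real_inner"
  assumes "u \<noteq> 0" and "{y. inner u y = inner u p} = {y. inner v y = inner v p}"
  shows "v = (inner v u / inner u u) *\<^sub>R u"
proof -
  define w where "w = v - (inner v u / inner u u) *\<^sub>R u"
  have "inner u w = 0"
    using assms(1) by (simp add: w_def inner_diff_right inner_commute)
  then have "p + w \<in> {y. inner u y = inner u p}"
    by (simp add: inner_add_right)
  then have "inner v w = 0"
    using assms(2) by (simp add: inner_add_right)
  then have "inner w w = 0"
    using \<open>inner u w = 0\<close> by (simp add: w_def inner_diff_left inner_commute)
  then show ?thesis
    by (simp add: w_def)
qed

locale smooth_gauge_body = gauge_body +
  assumes smooth: "\<And>p u v. p \<in> frontier C \<Longrightarrow> supporting_at C p u \<Longrightarrow> supporting_at C p v \<Longrightarrow>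
    {y. inner u y = inner u p} = {y. inner v y = inner v p}"
begin

lemma subgradient_unique:
  assumes "is_subgradient (half_gauge_sq C) x v" and "is_subgradient (half_gauge_sq C) x w"
  shows "v = w"
proof (cases "x = 0")
  case False
  define p where "p = inverse (N x) *\<^sub>R x"
  have "supporting_at C p v" "supporting_at C p w"
    using subgradient_supporting_at[OF False] assms by (simp_all add: p_def)
  then obtain l where "w = l *\<^sub>R v"
    using hyperplane_eq_imp_parallel smooth normalized_mem_frontier[OF False]
    by (metis p_def supporting_at_def)
  moreover have "inner v x = inner w x" and "inner v x > 0"
    using inner_subgradient_self[OF False] assms gauge_pos[OF False] by auto
  ultimately show ?thesis
    by simp
qed (use subgradient_at_zero assms in blast)

lemma phi_is_subgradient: "is_subgradient (half_gauge_sq C) x (phi C x)"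
proof -
  obtain g where g: "\<And>y. is_subgradient (half_gauge_sq C) y (g y)"
    using exists_subgradient by metis
  have "isCont g x"
  proof (rule isCont_unique_subgradient[OF continuous_on_half_gauge_sq g])
    show "v = g x" if "is_subgradient (half_gauge_sq C) x v" for v
      using subgradient_unique[OF that g] .
    show "norm (g y) \<le> (norm x + 2)\<^sup>2 / (2 * r\<^sup>2)" if "y \<in> cball x 1" for y
      using norm_subgradient_le[OF g, of y "norm x + 1"] that norm_triangle_sub[of y x]
      by (simp add: dist_norm norm_minus_commute add.commute)
  qed
  then have deriv: "((\<lambda>y. (N y)\<^sup>2 / 2) has_derivative inner (g x)) (at x)"
    using has_derivative_continuous_subgradient[OF g] by (simp add: half_gauge_sq_def[abs_def])
  have "(SOME v. ((\<lambda>y. (N y)\<^sup>2 / 2) has_derivative inner v) (at x)) = g x"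
  proof (rule some_equality)
    fix v assume "((\<lambda>y. (N y)\<^sup>2 / 2) has_derivative inner v) (at x)"
    then have "inner v = inner (g x)"
      using deriv by (rule has_derivative_unique)
    then show "v = g x"
      by (metis vector_eq_rdot)
  qed (rule deriv)
  moreover have "g 0 = 0"
    using subgradient_at_zero g by blast
  ultimately have "phi C x = g x"
    by (simp add: phi_def)
  then show ?thesis
    using g by simp
qed

end

lemma (in gauge_body) smooth_if_regular_symmetric_body:
  "regular_symmetric_body C \<Longrightarrow> smooth_gauge_body C r"
  unfolding regular_symmetric_body_def smooth_gauge_body_def smooth_gauge_body_axioms_def
  using gauge_body_axioms by blast

section \<open>Hausdorff distance\<close>

lemma hausdist_commute: "hausdist S T = hausdist T S"
  unfolding hausdist_def by (auto simp: max.commute)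

lemma exists_near_point_hausdist:
  fixes S T :: "'a::euclidean_space set"
  assumes "compact S" "compact T" "T \<noteq> {}" "x \<in> S"
  shows "\<exists>y\<in>T. dist x y \<le> hausdist S T"
proof -
  have "bdd_above ((\<lambda>x. infdist x T) ` S)"
    using assms by (intro bounded_imp_bdd_above compact_imp_bounded compact_continuous_image continuous_intros)
  then have "infdist x T \<le> hausdist S T"
    using assms cSUP_upper[of x S "\<lambda>x. infdist x T"]
    by (auto simp: hausdist_def compact_imp_bounded intro: max.coboundedI1)
  moreover obtain y where "y \<in> T" and "infdist x T = dist x y"
    using infdist_attains_inf[OF compact_imp_closed] assms(2,3) by blast
  ultimately show ?thesis
    by auto
qed

context gauge_body
begin

lemma cball_subset_if_near:
  assumes "convex D" "closed D" and near: "\<And>c. c \<in> C \<Longrightarrow> \<exists>x\<in>D. dist c x \<le> \<epsilon>"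
  shows "cball 0 (r - \<epsilon>) \<subseteq> D"
proof
  fix z :: 'a assume z: "z \<in> cball 0 (r - \<epsilon>)"
  show "z \<in> D"
  proof (rule ccontr)
    assume "z \<notin> D"
    then obtain a b where "inner a z < b" and ab: "\<And>x. x \<in> D \<Longrightarrow> inner a x > b"
      using separating_hyperplane_closed_point[OF assms(1,2)] by blast
    then have "a \<noteq> 0"
      using near[OF zero_mem] by fastforce
    have "- (r / norm a) *\<^sub>R a \<in> C"
      using cball_subset radius_pos by auto
    then obtain x where "x \<in> D" and x: "norm (x + (r / norm a) *\<^sub>R a) \<le> \<epsilon>"
      using near by (fastforce simp: dist_norm norm_minus_commute)
    have "inner a x + r * norm a = inner a (x + (r / norm a) *\<^sub>R a)"
      using \<open>a \<noteq> 0\<close> by (simp add: inner_add_right dot_square_norm power2_eq_square)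
    also have "\<dots> \<le> norm a * \<epsilon>"
      using norm_cauchy_schwarz mult_left_mono[OF x norm_ge_zero] by (rule order_trans)
    also have "\<dots> \<le> inner a z + r * norm a"
      using norm_cauchy_schwarz[of a "- z"] mult_left_mono[of "norm z" "r - \<epsilon>" "norm a"] z
      by (simp add: algebra_simps)
    finally show False
      using ab[OF \<open>x \<in> D\<close>] \<open>inner a z < b\<close> by simp
  qed
qed

lemma shrunk_mem_if_near:
  assumes "c \<in> C" and "dist x c \<le> \<epsilon>"
  shows "inverse (1 + \<epsilon> / r) *\<^sub>R x \<in> C"
proof (cases "\<epsilon> = 0")
  case False
  then have "\<epsilon> > 0"
    using assms(2) zero_le_dist[of x c] by linarith
  define \<mu> where "\<mu> = inverse (1 + \<epsilon> / r)"
  have "0 \<le> \<mu>" "\<mu> \<le> 1" and coeff: "(1 - \<mu>) * (r / \<epsilon>) = \<mu>"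
    using \<open>\<epsilon> > 0\<close> radius_pos by (auto simp: \<mu>_def field_simps)
  have "norm ((r / \<epsilon>) *\<^sub>R (x - c)) = (r / \<epsilon>) * dist x c"
    using \<open>\<epsilon> > 0\<close> radius_pos by (simp add: dist_norm)
  also have "\<dots> \<le> r"
    using assms(2) \<open>\<epsilon> > 0\<close> radius_pos by (simp add: field_simps)
  finally have "(r / \<epsilon>) *\<^sub>R (x - c) \<in> C"
    using cball_subset by auto
  then have "\<mu> *\<^sub>R c + (1 - \<mu>) *\<^sub>R ((r / \<epsilon>) *\<^sub>R (x - c)) \<in> C"
    using convexD[OF convex assms(1)] \<open>0 \<le> \<mu>\<close> \<open>\<mu> \<le> 1\<close> by (simp del: scaleR_scaleR)
  moreover have "\<mu> *\<^sub>R c + (1 - \<mu>) *\<^sub>R ((r / \<epsilon>) *\<^sub>R (x - c)) = \<mu> *\<^sub>R x"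
    unfolding scaleR_scaleR coeff by (simp add: algebra_simps)
  ultimately show ?thesis
    by (simp add: \<mu>_def)
qed (use assms in simp)

lemma gauge_le_if_near:
  assumes "gauge_body D \<rho>" and "\<epsilon> \<ge> 0" and near: "\<And>x. x \<in> D \<Longrightarrow> \<exists>c\<in>C. dist x c \<le> \<epsilon>"
  shows "N y \<le> (1 + \<epsilon> / r) * gauge_norm D y"
proof -
  define L where "L = 1 + \<epsilon> / r"
  have "L \<ge> 1"
    using assms(2) radius_pos by (simp add: L_def)
  have "N y / L \<le> gauge_norm D y"
  proof (rule dense_ge)
    fix t assume "gauge_norm D y < t"
    then have "t > 0" and "inverse t *\<^sub>R y \<in> D"
      using gauge_body.gauge_nonneg[OF assms(1), of y] gauge_body.gauge_le_iff[OF assms(1), of t y] by auto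
    then obtain c where "c \<in> C" and "dist (inverse t *\<^sub>R y) c \<le> \<epsilon>"
      using near by blast
    then have "inverse L *\<^sub>R (inverse t *\<^sub>R y) \<in> C"
      unfolding L_def by (rule shrunk_mem_if_near)
    then have "inverse (t * L) *\<^sub>R y \<in> C"
      by (simp add: mult.commute)
    then have "N y \<le> t * L"
      using gauge_le_iff[of "t * L" y] \<open>t > 0\<close> \<open>L \<ge> 1\<close> by simp
    then show "N y / L \<le> t"
      using \<open>L \<ge> 1\<close> by (simp add: field_simps)
  qed
  then show ?thesis
    using \<open>L \<ge> 1\<close> by (simp add: L_def field_simps)
qed

end

lemma hausdist_nonneg:
  fixes S T :: "'a::euclidean_space set"
  assumes "compact S" "compact T" "S \<noteq> {}" "T \<noteq> {}"
  shows "0 \<le> hausdist S T"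
  using exists_near_point_hausdist[OF assms(1,2,4)] assms(3) by (meson ex_in_conv order_trans zero_le_dist)

lemma abs_half_sq_diff_le:
  fixes a b c e :: real
  assumes "0 \<le> a" "0 \<le> b" "a \<le> c" "b \<le> c" "0 \<le> e"
    and "a \<le> (1 + e) * b" "b \<le> (1 + e) * a"
  shows "\<bar>a\<^sup>2 / 2 - b\<^sup>2 / 2\<bar> \<le> e * c\<^sup>2"
proof -
  have "a - b \<le> e * c" and "b - a \<le> e * c"
    using assms mult_left_mono[of b c e] mult_left_mono[of a c e] by (simp_all add: algebra_simps)
  then have "\<bar>a - b\<bar> \<le> e * c"
    by linarith
  have "a\<^sup>2 / 2 - b\<^sup>2 / 2 = (a - b) * (a + b) / 2"
    by (simp add: power2_eq_square field_simps)
  then have "\<bar>a\<^sup>2 / 2 - b\<^sup>2 / 2\<bar> = \<bar>a - b\<bar> * (a + b) / 2"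
    using assms(1,2) by (simp only: abs_divide abs_mult)
  also have "\<dots> \<le> (e * c) * (2 * c) / 2"
    using \<open>\<bar>a - b\<bar> \<le> e * c\<close> assms(1-5) by (intro divide_right_mono mult_mono) auto
  also have "\<dots> = e * c\<^sup>2"
    by (simp add: power2_eq_square)
  finally show ?thesis .
qed

lemma half_gauge_sq_hausdist_le:
  assumes A: "gauge_body A \<rho>" and B: "gauge_body B \<rho>"
  shows "\<bar>half_gauge_sq A y - half_gauge_sq B y\<bar> \<le> hausdist A B * (norm y)\<^sup>2 / \<rho> ^ 3"
proof -
  have "compact A" "compact B" "A \<noteq> {}" "B \<noteq> {}" "\<rho> > 0"
    using gauge_body.compact gauge_body.zero_mem gauge_body.radius_pos A B by blast+
  then have "0 \<le> hausdist A B"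
    and near_AB: "\<And>x. x \<in> A \<Longrightarrow> \<exists>c\<in>B. dist x c \<le> hausdist A B"
    and near_BA: "\<And>x. x \<in> B \<Longrightarrow> \<exists>c\<in>A. dist x c \<le> hausdist A B"
    using hausdist_nonneg exists_near_point_hausdist hausdist_commute by metis+
  have "\<bar>(gauge_norm A y)\<^sup>2 / 2 - (gauge_norm B y)\<^sup>2 / 2\<bar> \<le> (hausdist A B / \<rho>) * (norm y / \<rho>)\<^sup>2"
    using gauge_body.gauge_le_if_near[OF A B \<open>0 \<le> hausdist A B\<close> near_BA]
      gauge_body.gauge_le_if_near[OF B A \<open>0 \<le> hausdist A B\<close> near_AB]
      gauge_body.gauge_nonneg[OF A] gauge_body.gauge_nonneg[OF B]
      gauge_body.gauge_le_norm[OF A] gauge_body.gauge_le_norm[OF B] \<open>0 \<le> hausdist A B\<close> \<open>\<rho> > 0\<close>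
    by (intro abs_half_sq_diff_le) auto
  then show ?thesis
    by (simp add: half_gauge_sq_def power2_eq_square power3_eq_cube)
qed

lemma gauge_body_if_hausdist_less:
  assumes "gauge_body C r" and "compact D" "convex D" "D \<noteq> {}" and "hausdist D C < r"
  shows "gauge_body D (r - hausdist D C)"
proof unfold_locales
  have "C \<noteq> {}" "compact C"
    using gauge_body.zero_mem gauge_body.compact assms(1) by blast+
  then show "cball 0 (r - hausdist D C) \<subseteq> D"
    using gauge_body.cball_subset_if_near[OF assms(1) \<open>convex D\<close> compact_imp_closed[OF \<open>compact D\<close>]]
      exists_near_point_hausdist[OF \<open>compact C\<close> \<open>compact D\<close> \<open>D \<noteq> {}\<close>]
    by (simp add: hausdist_commute)
qed (use assms in auto)

lemma uniform_limit_half_gauge_sq: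
  assumes Cs: "\<forall>\<^sub>F n in sequentially. gauge_body (Cs n) \<rho>" and C: "gauge_body C \<rho>"
    and lim: "(\<lambda>n. hausdist (Cs n) C) \<longlonglongrightarrow> 0"
  shows "uniform_limit (cball 0 R) (\<lambda>n. half_gauge_sq (Cs n)) (half_gauge_sq C) sequentially"
proof (rule uniform_limitI)
  fix e :: real assume "e > 0"
  have "\<rho> > 0"
    using C gauge_body.radius_pos by blast
  define \<delta> where "\<delta> = e * \<rho> ^ 3 / (R\<^sup>2 + 1)"
  have "R\<^sup>2 + 1 > 0"
    by (simp add: add_nonneg_pos)
  then have "\<delta> > 0"
    using \<open>e > 0\<close> \<open>\<rho> > 0\<close> by (simp add: \<delta>_def)
  with lim have "\<forall>\<^sub>F n in sequentially. hausdist (Cs n) C < \<delta>"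
    by (rule order_tendstoD)
  with Cs show "\<forall>\<^sub>F n in sequentially. \<forall>y\<in>cball 0 R.
      dist (half_gauge_sq (Cs n) y) (half_gauge_sq C y) < e"
  proof eventually_elim
    case (elim n)
    show ?case
    proof
      fix y :: 'a assume "y \<in> cball 0 R"
      then have "(norm y)\<^sup>2 \<le> R\<^sup>2 + 1"
        using power_mono[of "norm y" R 2] by simp
      have "0 \<le> hausdist (Cs n) C"
        using elim C by (intro hausdist_nonneg) (auto dest: gauge_body.compact gauge_body.zero_mem)
      have "dist (half_gauge_sq (Cs n) y) (half_gauge_sq C y) \<le> hausdist (Cs n) C * (norm y)\<^sup>2 / \<rho> ^ 3"
        using half_gauge_sq_hausdist_le[OF _ C] elim by (simp add: dist_real_def)
      also have "\<dots> \<le> hausdist (Cs n) C * (R\<^sup>2 + 1) / \<rho> ^ 3"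
        using \<open>(norm y)\<^sup>2 \<le> R\<^sup>2 + 1\<close> \<open>0 \<le> hausdist (Cs n) C\<close> \<open>\<rho> > 0\<close>
        by (intro divide_right_mono mult_left_mono) auto
      also have "\<dots> < \<delta> * (R\<^sup>2 + 1) / \<rho> ^ 3"
        using elim \<open>\<rho> > 0\<close> by (intro divide_strict_right_mono mult_strict_right_mono) (auto simp: add_nonneg_pos)
      also have "\<dots> = e"
        using \<open>\<rho> > 0\<close> \<open>R\<^sup>2 + 1 > 0\<close> by (simp add: \<delta>_def)
      finally show "dist (half_gauge_sq (Cs n) y) (half_gauge_sq C y) < e" .
    qed
  qed
qed

section \<open>Convergence of the gradient maps\<close>

lemma eventually_smooth_gauge_body:
  assumes "\<And>n. regular_symmetric_body (Cs n)" and "gauge_body C r"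
    and "(\<lambda>n. hausdist (Cs n) C) \<longlonglongrightarrow> 0"
  shows "\<forall>\<^sub>F n in sequentially. smooth_gauge_body (Cs n) (r / 2)"
proof -
  have "r > 0"
    using assms(2) by (rule gauge_body.radius_pos)
  then have "\<forall>\<^sub>F n in sequentially. hausdist (Cs n) C < r / 2"
    using assms(3) by (intro order_tendstoD) auto
  then show ?thesis
  proof eventually_elim
    case (elim n)
    have "gauge_body (Cs n) (r - hausdist (Cs n) C)"
      using assms(1)[of n] elim \<open>r > 0\<close>
      by (intro gauge_body_if_hausdist_less[OF assms(2)]) (auto simp: regular_symmetric_body_def)
    then have "gauge_body (Cs n) (r / 2)"
      by (rule gauge_body.smaller_radius) (use elim \<open>r > 0\<close> in auto)
    then show ?case
      using assms(1) by (rule gauge_body.smooth_if_regular_symmetric_body)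
  qed
qed

lemma uniform_limit_phi:
  assumes Cs: "\<forall>\<^sub>F n in sequentially. smooth_gauge_body (Cs n) \<rho>" and C: "smooth_gauge_body C \<rho>"
    and "(\<lambda>n. hausdist (Cs n) C) \<longlonglongrightarrow> 0"
  shows "uniform_limit (cball 0 R) (\<lambda>n. phi (Cs n)) (phi C) sequentially"
proof -
  have "gauge_body C \<rho>"
    using C by (rule smooth_gauge_body.axioms)
  moreover have "\<forall>\<^sub>F n in sequentially. gauge_body (Cs n) \<rho>"
    using Cs by (rule eventually_mono) (rule smooth_gauge_body.axioms)
  ultimately have unif: "uniform_limit (cball 0 S) (\<lambda>n. half_gauge_sq (Cs n)) (half_gauge_sq C) sequentially" for S
    using assms(3) by (intro uniform_limit_half_gauge_sq)
  define B where "B = (R + 1)\<^sup>2 / (2 * \<rho>\<^sup>2)"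
  show ?thesis
  proof (rule uniform_limit_subgradients[where B = B, OF _ unif])
    show "(\<lambda>n. half_gauge_sq (Cs n) y) \<longlonglongrightarrow> half_gauge_sq C y" for y
      using uniform_limit_on_subset[OF unif[of "norm y"], of "{y}"] by simp
    show "continuous_on (cball 0 R) (half_gauge_sq C)"
      using gauge_body.continuous_on_half_gauge_sq[OF \<open>gauge_body C \<rho>\<close>] by (rule continuous_on_subset) simp
    show "\<forall>\<^sub>F n in sequentially. \<forall>x\<in>cball 0 R. is_subgradient (half_gauge_sq (Cs n)) x (phi (Cs n) x)"
      using Cs by eventually_elim (simp add: smooth_gauge_body.phi_is_subgradient)
    show "is_subgradient (half_gauge_sq C) x (phi C x)" for x
      using C by (rule smooth_gauge_body.phi_is_subgradient)
    show "v = phi C x" if "is_subgradient (half_gauge_sq C) x v" for x v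
      using smooth_gauge_body.subgradient_unique[OF C that smooth_gauge_body.phi_is_subgradient[OF C]] .
    show "\<forall>\<^sub>F n in sequentially. \<forall>x\<in>cball 0 R. norm (phi (Cs n) x) \<le> B"
      using Cs
    proof eventually_elim
      case (elim n)
      then show ?case
        using gauge_body.norm_subgradient_le[OF smooth_gauge_body.axioms(1)[OF elim]
            smooth_gauge_body.phi_is_subgradient[OF elim]] by (simp add: B_def)
    qed
    show "norm (phi C x) \<le> B" if "x \<in> cball 0 R" for x
      using gauge_body.norm_subgradient_le[OF \<open>gauge_body C \<rho>\<close> smooth_gauge_body.phi_is_subgradient[OF C]] that
      by (simp add: B_def)
  qed simp
qed

theorem proposition4p6:
  fixes Cs :: "nat \<Rightarrow> 'a::euclidean_space set" and C :: "'a set"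
  assumes "\<And>n. regular_symmetric_body (Cs n)"
    and "regular_symmetric_body C"
    and "(\<lambda>n. hausdist (Cs n) C) \<longlonglongrightarrow> 0"
  shows "(\<lambda>n. SUP x\<in>cball 0 1. norm (phi (Cs n) x - phi C x)) \<longlonglongrightarrow> 0"
proof -
  obtain r where "gauge_body C r"
    using regular_symmetric_body_imp_gauge_body[OF assms(2)] .
  then have "gauge_body C (r / 2)"
    using gauge_body.smaller_radius[of C r "r / 2"] gauge_body.radius_pos by auto
  then have "smooth_gauge_body C (r / 2)"
    using assms(2) by (rule gauge_body.smooth_if_regular_symmetric_body)
  moreover have "\<forall>\<^sub>F n in sequentially. smooth_gauge_body (Cs n) (r / 2)"
    using assms(1) \<open>gauge_body C r\<close> assms(3) by (rule eventually_smooth_gauge_body)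
  ultimately have "uniform_limit (cball 0 1) (\<lambda>n. phi (Cs n)) (phi C) sequentially"
    using assms(3) by (intro uniform_limit_phi)
  then show ?thesis
    by (rule uniform_limit_imp_SUP_norm_diff_tendsto_0) simp
qed

end
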